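(* Let $\Phi$ be a local interaction on $V$, let $\mathcal S=\{X\in\mathcal P_f(V):\Phi_X\neq0\}$, and let $\mathbf c,\mathbf u:\mathcal P_f(V)\to[0,\infty)$ satisfy, for every $Z\in\mathcal S$, $$\sum_{X\in\mathcal S}\chi(Z,X)\,\mathbf u(X)\,e^{\mathbf c(X)}\le\mathbf c(Z).$$ Then for every $Z\in\mathcal S$, $$\sum_{k=1}^\infty\sum_{[X_1,\dots,X_k]\in\mathbb S_k}\chi(Z,X_1,\dots,X_k)\prod_{j=1}^k\mathbf u(X_j)\le e^{\mathbf c(Z)}-1$$ and $$\sum_{k=1}^\infty\sum_{[X_1,\dots,X_k]\in\mathbb P_k}\chi(Z,X_1,\dots,X_k)\prod_{j=1}^k\mathbf u(X_j)\le\mathbf c(Z).$$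
   Context: $\mathcal P_f(V)$ is the set of finite subsets of a set $V$; a local interaction is a family $(\Phi_X)_{X\in\mathcal P_f(V)}$ of self-adjoint operators $\Phi_X$ acting on the sites of $X$. A finite multiset $[Y_1,\dots,Y_m]$ of finite subsets of $V$ is connected if its elements can be ordered so that each $Y_j$ ($j\ge 2$) intersects $Y_1\cup\dots\cup Y_{j-1}$; $\chi(Y_1,\dots,Y_m)=1$ if $[Y_1,\dots,Y_m]$ is connected and $0$ otherwise. $\mathbb S_k$ is the set of all multisets consisting of $k$ elements (with multiplicity) of $\mathcal S$, and $\mathbb P_k\subset\mathbb S_k$ the connected ones; in the sums each multiset is counted once. *)

theory Defs
  imports "HOL-Analysis.Analysis" "HOL-Library.Multiset"
begin

definition connected_ms :: "'v set multiset \<Rightarrow> bool" where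
  "connected_ms M \<longleftrightarrow> (\<exists>xs. mset xs = M \<and>
      (\<forall>j. 0 < j \<and> j < length xs \<longrightarrow> xs ! j \<inter> \<Union>(set (take j xs)) \<noteq> {}))"

definition chi :: "'v set multiset \<Rightarrow> real" where
  "chi M = (if connected_ms M then 1 else 0)"

definition supp_int :: "('v set \<Rightarrow> 'a::zero) \<Rightarrow> 'v set set" where
  "supp_int Phi = {X. finite X \<and> Phi X \<noteq> 0}"

definition msets_of :: "'b set \<Rightarrow> nat \<Rightarrow> 'b multiset set" where
  "msets_of S k = {M. size M = k \<and> set_mset M \<subseteq> S}"

definition conn_msets_of :: "'v set set \<Rightarrow> nat \<Rightarrow> 'v set multiset set" where
  "conn_msets_of S k = {M \<in> msets_of S k. connected_ms M}"

end

theory Submission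
  imports Defs
begin

(* Write w(Y) = u(Y) e^c(Y). For a finite subfamily T of S and a bound n on multiplicities,
  let G(Z,T) be the sum of chi(Z,M) prod u(M) over the multisets M on T with multiplicities at most n.
  Removing from T a set X that meets Z and sorting the clusters by the multiplicity m of X gives
    G(Z,T) <= G(Z,T-X) + u(X)/(1-u(X)) G(Z u X,T-X),
  because a connected cluster containing m >= 1 copies of X stays connected when these copies
  are merged into the root Z. By induction on T, the Kotecky-Preiss condition turns this into
  G(Z,T) <= exp (sum of w(Y) over the Y in T meeting Z) <= e^c(Z), and dropping the empty
  cluster gives the first bound. For the second, a connected cluster M with chi(Z,M) = 1
  contains some Y meeting Z, and M - Y is a cluster rooted at Y; hence the sum is at most the
  sum of u(Y) e^c(Y) over the Y meeting Z, which is at most c(Z). The infinite sums are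
  suprema of finite partial sums, and every finite family of clusters lies in some G(Z,T).

  Connectivity is handled through an order-free criterion: a multiset of sets is connected
  iff no splitting into two nonempty parts has parts with disjoint unions. *)

section \<open>Connected multisets of sets\<close>

definition chained :: "'v set list \<Rightarrow> bool" where
  "chained xs \<longleftrightarrow> (\<forall>j. 0 < j \<and> j < length xs \<longrightarrow> xs ! j \<inter> \<Union>(set (take j xs)) \<noteq> {})"

lemma connected_ms_iff_chained: "connected_ms M \<longleftrightarrow> (\<exists>xs. mset xs = M \<and> chained xs)"
  by (simp add: connected_ms_def chained_def)

lemma chained_snoc:
  "chained (xs @ [x]) \<longleftrightarrow> chained xs \<and> (xs \<noteq> [] \<longrightarrow> x \<inter> \<Union>(set xs) \<noteq> {})"
proof -
  have "(xs @ [x]) ! j \<inter> \<Union>(set (take j (xs @ [x]))) =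
      (if j < length xs then xs ! j \<inter> \<Union>(set (take j xs)) else x \<inter> \<Union>(set xs))"
    if "j < length (xs @ [x])" for j
    using that by (auto simp: nth_append)
  then show ?thesis
    unfolding chained_def by (auto simp: less_Suc_eq)
qed

lemma chained_split_meet:
  assumes "chained xs" "mset xs = A + B" "A \<noteq> {#}" "B \<noteq> {#}"
  shows "\<Union>(set_mset A) \<inter> \<Union>(set_mset B) \<noteq> {}"
  using assms
proof (induction xs arbitrary: A B rule: rev_induct)
  case Nil
  then show ?case by simp
next
  case (snoc x xs)
  have meet: "xs \<noteq> [] \<Longrightarrow> x \<inter> \<Union>(set xs) \<noteq> {}" and "chained xs"
    using snoc.prems(1) by (simp_all add: chained_snoc)
  have one_side: "\<Union>(set_mset A) \<inter> \<Union>(set_mset B) \<noteq> {}"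
    if split: "mset (xs @ [x]) = A + B" "A \<noteq> {#}" "B \<noteq> {#}" and "x \<in># A" for A B
  proof (cases "A = {#x#}")
    case True
    then have "mset xs = B" using split(1) by simp
    then show ?thesis using meet split(3) True by auto
  next
    case False
    have "add_mset x (mset xs) = add_mset x (A - {#x#} + B)"
      using split(1) \<open>x \<in># A\<close> by simp
    then have "mset xs = A - {#x#} + B" by simp
    moreover have "A - {#x#} \<noteq> {#}" using False \<open>x \<in># A\<close> by (metis insert_DiffM)
    ultimately have "\<Union>(set_mset (A - {#x#})) \<inter> \<Union>(set_mset B) \<noteq> {}"
      using snoc.IH[OF \<open>chained xs\<close>] split(3) by simp
    then show ?thesis by (auto dest: in_diffD)
  qed
  have "x \<in># A + B" unfolding snoc.prems(2)[symmetric] by simp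
  then have "x \<in># A \<or> x \<in># B" by simp
  then show ?case
    using snoc.prems one_side[of A B] one_side[of B A] by (auto simp: add.commute inf_commute)
qed

lemma connected_ms_iff_split_meet:
  "connected_ms M \<longleftrightarrow>
    (\<forall>A B. M = A + B \<longrightarrow> A \<noteq> {#} \<longrightarrow> B \<noteq> {#} \<longrightarrow> \<Union>(set_mset A) \<inter> \<Union>(set_mset B) \<noteq> {})"
  (is "_ \<longleftrightarrow> ?no_split")
proof
  assume "connected_ms M"
  then obtain xs where "chained xs" "mset xs = M" by (auto simp: connected_ms_iff_chained)
  then show ?no_split using chained_split_meet[of xs] by auto
next
  assume no_split: ?no_split
  have "\<exists>xs. chained xs \<and> mset xs \<subseteq># M \<and> length xs = k" if "k \<le> size M" for k
    using that
  proof (induction k)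
    case 0
    show ?case by (intro exI[of _ "[]"]) (simp add: chained_def)
  next
    case (Suc k)
    then obtain xs where xs: "chained xs" "mset xs \<subseteq># M" "length xs = k" by auto
    have "size (M - mset xs) = size M - k"
      using size_Diff_submset[OF xs(2)] xs(3) by simp
    then have rest: "M - mset xs \<noteq> {#}" using Suc.prems by auto
    obtain y where y: "y \<in># M - mset xs" "xs \<noteq> [] \<longrightarrow> y \<inter> \<Union>(set xs) \<noteq> {}"
    proof (cases "xs = []")
      case True
      then show ?thesis using rest that by blast
    next
      case False
      have "M = mset xs + (M - mset xs)" using xs(2) by simp
      then have "\<Union>(set xs) \<inter> \<Union>(set_mset (M - mset xs)) \<noteq> {}"
        using no_split rest False by fastforce
      then show ?thesis using that by blast
    qed
    have "mset xs + {#y#} \<subseteq># mset xs + (M - mset xs)"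
      using y(1) by (intro subset_mset.add_left_mono) simp
    then have "mset (xs @ [y]) \<subseteq># M" using xs(2) by simp
    then show ?case using xs y by (intro exI[of _ "xs @ [y]"]) (simp add: chained_snoc)
  qed
  then obtain xs where xs: "chained xs" "mset xs \<subseteq># M" "size (mset xs) = size M"
    by fastforce
  have "mset xs = M"
    using xs(2,3) mset_subset_size by (metis subset_mset.le_less less_irrefl)
  then show "connected_ms M"
    unfolding connected_ms_iff_chained using xs(1) by blast
qed

lemma connected_ms_singleton: "connected_ms {#Z#}"
  unfolding connected_ms_iff_chained using chained_snoc[of "[]" Z]
  by (intro exI[of _ "[Z]"]) (simp add: chained_def)

lemma connected_ms_pair: "Y \<inter> Z \<noteq> {} \<Longrightarrow> connected_ms {#Z, Y#}"
  unfolding connected_ms_iff_chained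
  using chained_snoc[of "[Z]" Y] chained_snoc[of "[]" Z]
  by (intro exI[of _ "[Z, Y]"]) (simp add: chained_def)

lemma connected_ms_touches:
  assumes "connected_ms (add_mset Z M)" "M \<noteq> {#}"
  shows "\<exists>Y\<in>#M. Y \<inter> Z \<noteq> {}"
proof -
  have "add_mset Z M = {#Z#} + M" by simp
  then have "Z \<inter> \<Union>(set_mset M) \<noteq> {}"
    using assms unfolding connected_ms_iff_split_meet by fastforce
  then show ?thesis by auto
qed

lemma connected_ms_absorb:
  assumes "connected_ms (add_mset Z (N + M))"
  shows "connected_ms (add_mset (Z \<union> \<Union>(set_mset N)) M)"
proof -
  let ?W = "Z \<union> \<Union>(set_mset N)"
  have no_split: "\<Union>(set_mset A) \<inter> \<Union>(set_mset B) \<noteq> {}"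
    if "add_mset Z (N + M) = A + B" "A \<noteq> {#}" "B \<noteq> {#}" for A B
    using assms[unfolded connected_ms_iff_split_meet, rule_format, OF that] .
  have meet: "\<Union>(set_mset A) \<inter> \<Union>(set_mset B) \<noteq> {}"
    if split: "add_mset ?W M = A + B" "A \<noteq> {#}" "B \<noteq> {#}" and "?W \<in># A" for A B
  proof -
    obtain A' where A': "A = add_mset ?W A'" using \<open>?W \<in># A\<close> by (metis multi_member_split)
    then have "M = A' + B" using split(1) by simp
    then have "add_mset Z (N + M) = add_mset Z (N + A') + B" by (simp add: add.assoc)
    then have "\<Union>(set_mset (add_mset Z (N + A'))) \<inter> \<Union>(set_mset B) \<noteq> {}"
      using no_split add_mset_not_empty split(3) by metis
    moreover have "\<Union>(set_mset (add_mset Z (N + A'))) = \<Union>(set_mset A)"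
      unfolding A' by auto
    ultimately show ?thesis by simp
  qed
  have "\<Union>(set_mset A) \<inter> \<Union>(set_mset B) \<noteq> {}"
    if "add_mset ?W M = A + B" "A \<noteq> {#}" "B \<noteq> {#}" for A B
  proof -
    have "?W \<in># A + B" unfolding that(1)[symmetric] by simp
    then consider "?W \<in># A" | "?W \<in># B" by auto
    then show ?thesis
    proof cases
      case 1
      show ?thesis by (rule meet[OF that 1])
    next
      case 2
      have "add_mset ?W M = B + A" using that(1) by (simp add: add.commute)
      then show ?thesis using meet[OF _ that(3,2) 2] by (simp add: inf_commute)
    qed
  qed
  then show ?thesis unfolding connected_ms_iff_split_meet by blast
qed

section \<open>Multisets with bounded multiplicities\<close>

(* Bounding multiplicities rather than sizes keeps the family stable under splitting off all
  copies of one element, see bounded_msets_insert. *)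
definition bounded_msets :: "nat \<Rightarrow> 'a set \<Rightarrow> 'a multiset set" where
  "bounded_msets n T = {M. set_mset M \<subseteq> T \<and> (\<forall>x. count M x \<le> n)}"

lemma bounded_msets_empty: "bounded_msets n {} = {{#}}"
  by (auto simp: bounded_msets_def)

lemma empty_in_bounded_msets: "{#} \<in> bounded_msets n T"
  by (simp add: bounded_msets_def)

lemma diff_in_bounded_msets: "M \<in> bounded_msets n T \<Longrightarrow> M - N \<in> bounded_msets n T"
  unfolding bounded_msets_def by (auto dest: in_diffD intro: le_trans[OF diff_le_self])

lemma bounded_msets_insert:
  assumes "X \<notin> T"
  shows "bounded_msets n (insert X T) =
    (\<lambda>(m, M). replicate_mset m X + M) ` ({..n} \<times> bounded_msets n T)"
proof
  show "bounded_msets n (insert X T) \<subseteq> (\<lambda>(m, M). replicate_mset m X + M) ` ({..n} \<times> bounded_msets n T)"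
  proof
    fix M assume M: "M \<in> bounded_msets n (insert X T)"
    let ?M' = "filter_mset (\<lambda>Y. Y \<noteq> X) M"
    have "M = replicate_mset (count M X) X + ?M'"
      by (metis filter_eq_replicate_mset multiset_partition)
    moreover have "?M' \<in> bounded_msets n T" "count M X \<le> n"
      using M by (auto simp: bounded_msets_def)
    ultimately show "M \<in> (\<lambda>(m, M). replicate_mset m X + M) ` ({..n} \<times> bounded_msets n T)"
      by (intro image_eqI[of _ _ "(count M X, ?M')"]) auto
  qed
  show "(\<lambda>(m, M). replicate_mset m X + M) ` ({..n} \<times> bounded_msets n T) \<subseteq> bounded_msets n (insert X T)"
  proof -
    have "replicate_mset m X + M \<in> bounded_msets n (insert X T)"
      if "m \<le> n" "M \<in> bounded_msets n T" for m M
    proof -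
      have "X \<notin># M" using that(2) assms by (auto simp: bounded_msets_def)
      then show ?thesis using that by (auto simp: bounded_msets_def not_in_iff split: if_splits)
    qed
    then show ?thesis by auto
  qed
qed

lemma inj_on_replicate_mset_plus:
  "inj_on (\<lambda>(m, M). replicate_mset m X + M) (UNIV \<times> {M. X \<notin># M})"
proof (rule inj_onI, clarsimp)
  fix m m' M M'
  assume "X \<notin># M" "X \<notin># M'" and eq: "replicate_mset m X + M = replicate_mset m' X + M'"
  from eq have "count (replicate_mset m X + M) X = count (replicate_mset m' X + M') X"
    by (rule arg_cong)
  with \<open>X \<notin># M\<close> \<open>X \<notin># M'\<close> have "m = m'" by (simp add: not_in_iff)
  then show "m = m' \<and> M = M'" using eq by simp
qed

lemma sum_bounded_msets_insert:
  assumes "X \<notin> T"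
  shows "(\<Sum>M\<in>bounded_msets n (insert X T). f M) =
    (\<Sum>m\<le>n. \<Sum>M\<in>bounded_msets n T. f (replicate_mset m X + M))"
proof -
  have inj: "inj_on (\<lambda>(m, M). replicate_mset m X + M) ({..n} \<times> bounded_msets n T)"
    by (rule inj_on_subset[OF inj_on_replicate_mset_plus]) (use assms in \<open>auto simp: bounded_msets_def\<close>)
  have "(\<Sum>M\<in>bounded_msets n (insert X T). f M) =
      (\<Sum>(m, M)\<in>{..n} \<times> bounded_msets n T. f (replicate_mset m X + M))"
    using sum.reindex[OF inj, of f] unfolding bounded_msets_insert[OF assms]
    by (simp add: comp_def case_prod_unfold)
  also have "\<dots> = (\<Sum>m\<le>n. \<Sum>M\<in>bounded_msets n T. f (replicate_mset m X + M))"
    by (rule sum.cartesian_product[symmetric])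
  finally show ?thesis .
qed

lemma finite_bounded_msets: "finite T \<Longrightarrow> finite (bounded_msets n T)"
  by (induction T rule: finite_induct) (simp_all add: bounded_msets_empty bounded_msets_insert)

lemma finite_subset_bounded_msets:
  assumes "finite F"
  shows "\<exists>n. F \<subseteq> bounded_msets n (\<Union>M\<in>F. set_mset M)"
proof
  show "F \<subseteq> bounded_msets (\<Sum>M\<in>F. size M) (\<Union>M\<in>F. set_mset M)"
  proof
    fix M assume "M \<in> F"
    then have "count M x \<le> (\<Sum>M\<in>F. size M)" for x
      using assms by (intro le_trans[OF count_le_size] member_le_sum) auto
    then show "M \<in> bounded_msets (\<Sum>M\<in>F. size M) (\<Union>M\<in>F. set_mset M)"
      using \<open>M \<in> F\<close> by (auto simp: bounded_msets_def)
  qed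
qed

section \<open>Truncated cluster sums\<close>

lemma prod_mset_image_nonneg:
  fixes u :: "'a \<Rightarrow> 'b::linordered_semidom"
  shows "(\<And>x. x \<in># M \<Longrightarrow> 0 \<le> u x) \<Longrightarrow> 0 \<le> prod_mset (image_mset u M)"
  by (induction M) auto

definition cluster_weight :: "('v set \<Rightarrow> real) \<Rightarrow> 'v set \<Rightarrow> 'v set multiset \<Rightarrow> real" where
  "cluster_weight u Z M = chi (add_mset Z M) * prod_mset (image_mset u M)"

definition cluster_sum :: "('v set \<Rightarrow> real) \<Rightarrow> nat \<Rightarrow> 'v set \<Rightarrow> 'v set set \<Rightarrow> real" where
  "cluster_sum u n Z T = (\<Sum>M\<in>bounded_msets n T. cluster_weight u Z M)"

lemma cluster_weight_empty [simp]: "cluster_weight u Z {#} = 1"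
  by (simp add: cluster_weight_def chi_def connected_ms_singleton)

lemma cluster_weight_nonneg: "(\<And>X. X \<in># M \<Longrightarrow> 0 \<le> u X) \<Longrightarrow> 0 \<le> cluster_weight u Z M"
  unfolding cluster_weight_def chi_def by (simp add: prod_mset_image_nonneg)

lemma cluster_sum_nonneg: "(\<And>X. X \<in> T \<Longrightarrow> 0 \<le> u X) \<Longrightarrow> 0 \<le> cluster_sum u n Z T"
  unfolding cluster_sum_def bounded_msets_def by (auto intro!: sum_nonneg cluster_weight_nonneg)

lemma cluster_sum_isolated:
  assumes "finite T" and "\<And>X. X \<in> T \<Longrightarrow> X \<inter> Z = {}"
  shows "cluster_sum u n Z T = 1"
proof -
  have "cluster_weight u Z M = 0" if "M \<in> bounded_msets n T" "M \<noteq> {#}" for M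
    using connected_ms_touches[of Z M] that assms(2) by (auto simp: cluster_weight_def chi_def bounded_msets_def)
  then have "(\<Sum>M\<in>bounded_msets n T - {{#}}. cluster_weight u Z M) = 0"
    by (intro sum.neutral) blast
  then show ?thesis
    unfolding cluster_sum_def
    by (simp add: sum.remove[OF finite_bounded_msets[OF assms(1)] empty_in_bounded_msets])
qed

lemma cluster_weight_absorb_le:
  assumes "0 < m" "0 \<le> u X" "\<And>Y. Y \<in># M \<Longrightarrow> 0 \<le> u Y"
  shows "cluster_weight u Z (replicate_mset m X + M) \<le> u X ^ m * cluster_weight u (Z \<union> X) M"
proof -
  have "\<Union>(set_mset (replicate_mset m X)) = X" using assms(1) by simp
  then have "chi (add_mset Z (replicate_mset m X + M)) \<le> chi (add_mset (Z \<union> X) M)"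
    using connected_ms_absorb[of Z "replicate_mset m X" M] by (auto simp: chi_def)
  moreover have "0 \<le> prod_mset (image_mset u M)"
    using assms(3) by (simp add: prod_mset_image_nonneg)
  ultimately have "chi (add_mset Z (replicate_mset m X + M)) * (u X ^ m * prod_mset (image_mset u M))
      \<le> chi (add_mset (Z \<union> X) M) * (u X ^ m * prod_mset (image_mset u M))"
    using assms(2) by (intro mult_right_mono mult_nonneg_nonneg) simp_all
  then show ?thesis by (simp add: cluster_weight_def mult_ac)
qed

lemma cluster_sum_insert_le:
  assumes "X \<notin> T" "0 \<le> u X" "\<And>Y. Y \<in> T \<Longrightarrow> 0 \<le> u Y"
  shows "cluster_sum u n Z (insert X T)
    \<le> cluster_sum u n Z T + (\<Sum>m=1..n. u X ^ m) * cluster_sum u n (Z \<union> X) T"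
proof -
  let ?h = "\<lambda>m. \<Sum>M\<in>bounded_msets n T. cluster_weight u Z (replicate_mset m X + M)"
  have "{..n} = insert 0 {1..n}" by auto
  then have "cluster_sum u n Z (insert X T) = ?h 0 + (\<Sum>m=1..n. ?h m)"
    unfolding cluster_sum_def sum_bounded_msets_insert[OF assms(1)] by simp
  also have "?h 0 = cluster_sum u n Z T" by (simp add: cluster_sum_def)
  also have "(\<Sum>m=1..n. ?h m) \<le> (\<Sum>m=1..n. u X ^ m * cluster_sum u n (Z \<union> X) T)"
    unfolding cluster_sum_def sum_distrib_left
    using assms(2,3) by (intro sum_mono cluster_weight_absorb_le) (auto simp: bounded_msets_def)
  finally show ?thesis by (simp add: sum_distrib_right)
qed

definition touching_sum :: "('v set \<Rightarrow> real) \<Rightarrow> 'v set \<Rightarrow> 'v set set \<Rightarrow> real" where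
  "touching_sum w Z T = (\<Sum>Y\<in>T. if Y \<inter> Z \<noteq> {} then w Y else 0)"

lemma touching_sum_insert:
  "finite T \<Longrightarrow> X \<notin> T \<Longrightarrow> X \<inter> Z \<noteq> {} \<Longrightarrow> touching_sum w Z (insert X T) = w X + touching_sum w Z T"
  by (simp add: touching_sum_def)

lemma touching_sum_nonneg: "(\<And>Y. Y \<in> T \<Longrightarrow> 0 \<le> w Y) \<Longrightarrow> 0 \<le> touching_sum w Z T"
  unfolding touching_sum_def by (intro sum_nonneg) auto

lemma touching_sum_Un_le:
  "(\<And>Y. Y \<in> T \<Longrightarrow> 0 \<le> w Y) \<Longrightarrow> touching_sum w (Z \<union> X) T \<le> touching_sum w Z T + touching_sum w X T"
  unfolding touching_sum_def sum.distrib[symmetric] by (intro sum_mono) auto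

lemma touching_sum_le_sum_chi:
  "(\<And>Y. Y \<in> T \<Longrightarrow> 0 \<le> w Y) \<Longrightarrow> touching_sum w Z T \<le> (\<Sum>Y\<in>T. chi {#Z, Y#} * w Y)"
  unfolding touching_sum_def by (intro sum_mono) (auto simp: chi_def connected_ms_pair)

lemma sum_remove_mset_le:
  fixes f :: "'a multiset \<Rightarrow> 'b::ordered_comm_monoid_add"
  assumes "finite D" "F \<subseteq> D" "\<And>M. M \<in> D \<Longrightarrow> M - {#Y#} \<in> D" "\<And>M. M \<in> D \<Longrightarrow> 0 \<le> f M"
  shows "(\<Sum>M\<in>{M\<in>F. Y \<in># M}. f (M - {#Y#})) \<le> (\<Sum>M\<in>D. f M)"
proof -
  have "inj_on (\<lambda>M. M - {#Y#}) {M\<in>F. Y \<in># M}"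
    by (rule inj_onI) (metis insert_DiffM mem_Collect_eq)
  then have "(\<Sum>M\<in>{M\<in>F. Y \<in># M}. f (M - {#Y#})) = (\<Sum>M\<in>(\<lambda>M. M - {#Y#}) ` {M\<in>F. Y \<in># M}. f M)"
    by (simp add: sum.reindex)
  also have "\<dots> \<le> (\<Sum>M\<in>D. f M)"
    using assms by (intro sum_mono2) auto
  finally show ?thesis .
qed

lemma connected_cluster_weight_le:
  assumes "connected_ms M" "M \<noteq> {#}" "finite T" "set_mset M \<subseteq> T" "\<And>Y. Y \<in> T \<Longrightarrow> 0 \<le> u Y"
  shows "cluster_weight u Z M \<le>
    (\<Sum>Y\<in>T. if Y \<inter> Z \<noteq> {} \<and> Y \<in># M then u Y * cluster_weight u Y (M - {#Y#}) else 0)"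
    (is "_ \<le> (\<Sum>Y\<in>T. ?t Y)")
proof -
  have t_nonneg: "0 \<le> ?t Y" if "Y \<in> T" for Y
    using that assms(4,5) by (auto intro!: mult_nonneg_nonneg cluster_weight_nonneg dest: in_diffD)
  show ?thesis
  proof (cases "connected_ms (add_mset Z M)")
    case False
    then show ?thesis using t_nonneg by (simp add: cluster_weight_def chi_def sum_nonneg)
  next
    case True
    then obtain Y where Y: "Y \<in># M" "Y \<inter> Z \<noteq> {}" using connected_ms_touches assms(2) by blast
    then have M: "add_mset Y (M - {#Y#}) = M" by simp
    have "cluster_weight u Z M = prod_mset (image_mset u M)"
      using True by (simp add: cluster_weight_def chi_def)
    also have "\<dots> = u Y * prod_mset (image_mset u (M - {#Y#}))"
      using arg_cong[OF M, of "\<lambda>N. prod_mset (image_mset u N)"] by simp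
    also have "\<dots> = u Y * cluster_weight u Y (M - {#Y#})"
      using assms(1) by (simp add: M cluster_weight_def chi_def)
    also have "\<dots> = ?t Y" using Y by simp
    also have "\<dots> \<le> (\<Sum>Y\<in>T. ?t Y)"
      using Y(1) assms(3,4) t_nonneg by (intro member_le_sum) auto
    finally show ?thesis .
  qed
qed

lemma sum_power_le_geometric:
  fixes x :: real
  assumes "0 \<le> x" "x < 1"
  shows "(\<Sum>m=1..n. x ^ m) \<le> x / (1 - x)"
proof -
  have "(\<Sum>m=1..n. x ^ m) = x * (\<Sum>m<n. x ^ m)"
    by (simp add: sum.atLeast1_atMost_eq sum_distrib_left)
  also have "\<dots> = x * ((1 - x ^ n) / (1 - x))"
    using assms by (simp add: sum_gp_strict)
  also have "\<dots> \<le> x * (1 / (1 - x))"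
    using assms by (intro mult_left_mono divide_right_mono) auto
  finally show ?thesis by simp
qed

lemma mult_exp_le_imp_less_one:
  fixes x a :: real
  assumes "x * exp a \<le> a"
  shows "x < 1"
proof -
  have "a < exp a" using exp_ge_add_one_self[of a] by linarith
  with assms have "x * exp a < 1 * exp a" by linarith
  then show ?thesis by (rule mult_right_less_imp_less) simp
qed

lemma mult_exp_le_imp_geometric_le:
  fixes x a :: real
  assumes "0 \<le> x" "x * exp a \<le> a"
  shows "x / (1 - x) * exp (a - x * exp a) \<le> exp (x * exp a) - 1"
proof -
  define b where "b = x * exp a"
  have "x < 1" using assms(2) by (rule mult_exp_le_imp_less_one)
  have "0 \<le> b" "b \<le> a" using assms by (simp_all add: b_def)
  have x_eq: "x = b * exp (- a)" by (simp add: b_def exp_minus field_simps)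
  then have x_le: "x \<le> b * exp (- b)" using \<open>0 \<le> b\<close> \<open>b \<le> a\<close> by (simp add: mult_left_mono)
  have "1 \<le> exp b - b" using exp_ge_add_one_self[of b] by linarith
  have "1 - b * exp (- b) = (exp b - b) / exp b" by (simp add: exp_minus field_simps)
  have "x / (1 - x) * exp (a - b) = b * exp (- b) / (1 - x)"
    using \<open>x < 1\<close> by (simp add: x_eq exp_diff exp_minus field_simps)
  also have "\<dots> \<le> b * exp (- b) / (1 - b * exp (- b))"
    using x_le \<open>x < 1\<close> \<open>0 \<le> b\<close> \<open>1 - b * exp (- b) = _\<close> \<open>1 \<le> exp b - b\<close>
    by (intro divide_left_mono mult_nonneg_nonneg) auto
  also have "\<dots> = b / (exp b - b)"
    using \<open>1 \<le> exp b - b\<close> by (simp add: exp_minus field_simps)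
  also have "\<dots> \<le> b"
    using \<open>1 \<le> exp b - b\<close> \<open>0 \<le> b\<close> by (simp add: divide_le_eq mult_le_cancel_left1)
  also have "\<dots> \<le> exp b - 1" using exp_ge_add_one_self[of b] by linarith
  finally show ?thesis by (simp add: b_def)
qed

section \<open>Infinite sums as suprema of finite sums\<close>

lemma sum_le_if_infsum_ennreal_le:
  fixes f :: "'a \<Rightarrow> real"
  assumes "finite T" "T \<subseteq> S" "\<And>x. x \<in> S \<Longrightarrow> 0 \<le> f x"
    and "(\<Sum>\<^sub>\<infinity>x\<in>S. ennreal (f x)) \<le> ennreal b" "0 \<le> b"
  shows "sum f T \<le> b"
proof -
  have "ennreal (sum f T) = (\<Sum>\<^sub>\<infinity>x\<in>T. ennreal (f x))"
    using assms(1-3) by (auto simp: subset_iff)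
  also have "\<dots> \<le> (\<Sum>\<^sub>\<infinity>x\<in>S. ennreal (f x))"
    using assms(2) by (intro infsum_mono_neutral nonneg_summable_on_complete) auto
  also have "\<dots> \<le> ennreal b" by (rule assms(4))
  finally show ?thesis using assms(5) by simp
qed

lemma infsum_infsum_ennreal_le:
  fixes g :: "'b \<Rightarrow> real" and A :: "'a \<Rightarrow> 'b set"
  assumes disjoint: "\<And>k l. k \<in> K \<Longrightarrow> l \<in> K \<Longrightarrow> k \<noteq> l \<Longrightarrow> A k \<inter> A l = {}"
    and nonneg: "\<And>x. x \<in> (\<Union>k\<in>K. A k) \<Longrightarrow> 0 \<le> g x"
    and bound: "\<And>F. finite F \<Longrightarrow> F \<subseteq> (\<Union>k\<in>K. A k) \<Longrightarrow> sum g F \<le> B"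
  shows "(\<Sum>\<^sub>\<infinity>k\<in>K. \<Sum>\<^sub>\<infinity>x\<in>A k. ennreal (g x)) \<le> ennreal B"
proof (rule infsum_le_finite_sums)
  fix K' assume K': "finite K'" "K' \<subseteq> K"
  have "(\<Sum>k\<in>K'. \<Sum>\<^sub>\<infinity>x\<in>A k. ennreal (g x)) = (\<Sum>\<^sub>\<infinity>x\<in>(\<Union>k\<in>K'. A k). ennreal (g x))"
    using K' disjoint by (intro sum_infsum nonneg_summable_on_complete) auto
  also have "\<dots> \<le> ennreal B"
  proof (rule infsum_le_finite_sums)
    fix F assume "finite F" "F \<subseteq> (\<Union>k\<in>K'. A k)"
    then have "F \<subseteq> (\<Union>k\<in>K. A k)" using K'(2) by blast
    then show "(\<Sum>x\<in>F. ennreal (g x)) \<le> ennreal B"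
      using nonneg bound[OF \<open>finite F\<close>] by (simp add: subset_iff ennreal_leI)
  qed (simp add: nonneg_summable_on_complete)
  finally show "(\<Sum>k\<in>K'. \<Sum>\<^sub>\<infinity>x\<in>A k. ennreal (g x)) \<le> ennreal B" .
qed (simp add: nonneg_summable_on_complete)

lemma msets_of_disjoint: "k \<noteq> l \<Longrightarrow> msets_of S k \<inter> msets_of S l = {}"
  by (auto simp: msets_of_def)

section \<open>The Kotecky-Preiss condition\<close>

locale kotecky_preiss =
  fixes S :: "'v set set" and u c :: "'v set \<Rightarrow> real"
  assumes u_nonneg: "X \<in> S \<Longrightarrow> 0 \<le> u X"
    and touching_sum_le: "X \<in> S \<Longrightarrow> finite T \<Longrightarrow> T \<subseteq> S \<Longrightarrow>
      touching_sum (\<lambda>Y. u Y * exp (c Y)) X T \<le> c X"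
begin

abbreviation weight :: "'v set \<Rightarrow> real" where
  "weight \<equiv> \<lambda>Y. u Y * exp (c Y)"

lemma weight_nonneg: "X \<in> S \<Longrightarrow> 0 \<le> weight X"
  by (simp add: u_nonneg)

lemma cluster_sum_insert_le_exp:
  assumes "finite T" "insert X T \<subseteq> S" "X \<notin> T" "X \<inter> Z \<noteq> {}"
    and IH: "\<And>Z. cluster_sum u n Z T \<le> exp (touching_sum weight Z T)"
  shows "cluster_sum u n Z (insert X T) \<le> exp (touching_sum weight Z (insert X T))"
proof -
  define \<sigma> where "\<sigma> = touching_sum weight Z T"
  define \<tau> where "\<tau> = touching_sum weight X T"
  have XS: "X \<in> S" and TS: "T \<subseteq> S" using assms(2) by auto
  have "X \<inter> X \<noteq> {}" using assms(4) by blast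
  then have "weight X + \<tau> = touching_sum weight X (insert X T)"
    using assms(1,3) by (simp add: \<tau>_def touching_sum_insert)
  also have "\<dots> \<le> c X" using touching_sum_le[OF XS] assms(1,2) by simp
  finally have \<tau>_le: "\<tau> \<le> c X - weight X" by simp
  have "0 \<le> \<tau>" unfolding \<tau>_def using TS by (intro touching_sum_nonneg weight_nonneg) auto
  then have "weight X \<le> c X" using \<tau>_le by simp
  then have "u X < 1" by (rule mult_exp_le_imp_less_one)
  have "cluster_sum u n (Z \<union> X) T \<le> exp (touching_sum weight (Z \<union> X) T)" by (rule IH)
  also have "\<dots> \<le> exp (\<sigma> + \<tau>)"
    unfolding \<sigma>_def \<tau>_def using TS by (simp add: touching_sum_Un_le weight_nonneg subset_iff)
  also have "\<dots> \<le> exp (\<sigma> + (c X - weight X))" using \<tau>_le by simp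
  finally have ZX: "cluster_sum u n (Z \<union> X) T \<le> exp \<sigma> * exp (c X - weight X)" by (simp add: exp_add)
  have "cluster_sum u n Z (insert X T)
      \<le> cluster_sum u n Z T + (\<Sum>m=1..n. u X ^ m) * cluster_sum u n (Z \<union> X) T"
    using assms(3) u_nonneg XS TS by (intro cluster_sum_insert_le) auto
  also have "\<dots> \<le> exp \<sigma> + u X / (1 - u X) * (exp \<sigma> * exp (c X - weight X))"
    using IH[of Z] ZX sum_power_le_geometric[OF u_nonneg[OF XS] \<open>u X < 1\<close>]
      \<open>u X < 1\<close> u_nonneg XS TS
    by (intro add_mono mult_mono) (auto simp: \<sigma>_def intro!: sum_nonneg cluster_sum_nonneg)
  also have "\<dots> = exp \<sigma> * (1 + u X / (1 - u X) * exp (c X - weight X))"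
    by (simp add: algebra_simps)
  also have "\<dots> \<le> exp \<sigma> * exp (weight X)"
    using mult_exp_le_imp_geometric_le[OF u_nonneg[OF XS] \<open>weight X \<le> c X\<close>] by simp
  also have "\<dots> = exp (touching_sum weight Z (insert X T))"
    using assms(1,3,4) by (simp add: \<sigma>_def touching_sum_insert exp_add)
  finally show ?thesis .
qed

lemma cluster_sum_le_exp_touching_sum:
  "finite T \<Longrightarrow> T \<subseteq> S \<Longrightarrow> cluster_sum u n Z T \<le> exp (touching_sum weight Z T)"
proof (induction T arbitrary: Z rule: finite_remove_induct)
  case empty
  show ?case using cluster_sum_isolated[of "{}" Z u n] by (simp add: touching_sum_def)
next
  case (remove A)
  show ?case
  proof (cases "\<exists>X\<in>A. X \<inter> Z \<noteq> {}")
    case True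
    then obtain X where "X \<in> A" "X \<inter> Z \<noteq> {}" by blast
    then have "A = insert X (A - {X})" by blast
    moreover have "cluster_sum u n Z (insert X (A - {X})) \<le> exp (touching_sum weight Z (insert X (A - {X})))"
      using remove \<open>X \<in> A\<close> \<open>X \<inter> Z \<noteq> {}\<close> by (intro cluster_sum_insert_le_exp) auto
    ultimately show ?thesis by simp
  next
    case False
    then have "cluster_sum u n Z A = 1" using remove.hyps(1) by (intro cluster_sum_isolated) auto
    moreover have "0 \<le> touching_sum weight Z A"
      using remove.prems by (intro touching_sum_nonneg weight_nonneg) auto
    ultimately show ?thesis by simp
  qed
qed

lemma cluster_sum_le_exp: "finite T \<Longrightarrow> T \<subseteq> S \<Longrightarrow> Z \<in> S \<Longrightarrow> cluster_sum u n Z T \<le> exp (c Z)"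
  using cluster_sum_le_exp_touching_sum touching_sum_le by (meson exp_le_cancel_iff order.trans)

lemma sum_clusters_le:
  assumes "finite F" "\<And>M. M \<in> F \<Longrightarrow> set_mset M \<subseteq> S \<and> M \<noteq> {#}" "Z \<in> S"
  shows "(\<Sum>M\<in>F. cluster_weight u Z M) \<le> exp (c Z) - 1"
proof -
  define T where "T = (\<Union>M\<in>F. set_mset M)"
  obtain n where F: "F \<subseteq> bounded_msets n T"
    using finite_subset_bounded_msets[OF assms(1)] unfolding T_def by blast
  have T: "finite T" "T \<subseteq> S" using assms(1,2) by (auto simp: T_def)
  have "(\<Sum>M\<in>F. cluster_weight u Z M) \<le> (\<Sum>M\<in>bounded_msets n T - {{#}}. cluster_weight u Z M)"
    using F assms(2) T u_nonneg
    by (intro sum_mono2 finite_Diff finite_bounded_msets cluster_weight_nonneg)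
      (auto simp: bounded_msets_def)
  also have "\<dots> = cluster_sum u n Z T - 1"
    unfolding cluster_sum_def
    by (simp add: sum_diff1 finite_bounded_msets[OF T(1)] empty_in_bounded_msets)
  also have "\<dots> \<le> exp (c Z) - 1" using cluster_sum_le_exp[OF T assms(3)] by simp
  finally show ?thesis .
qed

lemma sum_remove_clusters_le_exp:
  assumes "finite T" "T \<subseteq> S" "Y \<in> S" "F \<subseteq> bounded_msets n T"
  shows "(\<Sum>M\<in>{M\<in>F. Y \<in># M}. cluster_weight u Y (M - {#Y#})) \<le> exp (c Y)"
proof -
  have "(\<Sum>M\<in>{M\<in>F. Y \<in># M}. cluster_weight u Y (M - {#Y#})) \<le> cluster_sum u n Y T"
    unfolding cluster_sum_def using assms u_nonneg
    by (intro sum_remove_mset_le finite_bounded_msets diff_in_bounded_msets cluster_weight_nonneg)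
      (auto simp: bounded_msets_def)
  also have "\<dots> \<le> exp (c Y)" using cluster_sum_le_exp assms(1-3) .
  finally show ?thesis .
qed

lemma sum_connected_clusters_le:
  assumes "finite F" "\<And>M. M \<in> F \<Longrightarrow> set_mset M \<subseteq> S \<and> M \<noteq> {#} \<and> connected_ms M" "Z \<in> S"
  shows "(\<Sum>M\<in>F. cluster_weight u Z M) \<le> c Z"
proof -
  define T where "T = (\<Union>M\<in>F. set_mset M)"
  obtain n where F: "F \<subseteq> bounded_msets n T"
    using finite_subset_bounded_msets[OF assms(1)] unfolding T_def by blast
  have T: "finite T" "T \<subseteq> S" using assms(1,2) by (auto simp: T_def)
  define t where "t Y M = (if Y \<inter> Z \<noteq> {} \<and> Y \<in># M then u Y * cluster_weight u Y (M - {#Y#}) else 0)"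
    for Y M
  have "(\<Sum>M\<in>F. cluster_weight u Z M) \<le> (\<Sum>M\<in>F. \<Sum>Y\<in>T. t Y M)"
    unfolding t_def using assms(2) T u_nonneg
    by (intro sum_mono connected_cluster_weight_le) (auto simp: T_def)
  also have "\<dots> = (\<Sum>Y\<in>T. \<Sum>M\<in>F. t Y M)" by (rule sum.swap)
  also have "\<dots> \<le> touching_sum weight Z T"
    unfolding touching_sum_def
  proof (rule sum_mono)
    fix Y assume "Y \<in> T"
    then have "Y \<in> S" using T(2) by auto
    have "(\<Sum>M\<in>F. t Y M) \<le> weight Y" if "Y \<inter> Z \<noteq> {}"
    proof -
      have "(\<Sum>M\<in>F. t Y M) = (\<Sum>M\<in>{M\<in>F. Y \<in># M}. u Y * cluster_weight u Y (M - {#Y#}))"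
        using that assms(1) by (simp add: t_def sum.inter_filter)
      also have "\<dots> = u Y * (\<Sum>M\<in>{M\<in>F. Y \<in># M}. cluster_weight u Y (M - {#Y#}))"
        by (simp add: sum_distrib_left)
      also have "\<dots> \<le> weight Y"
        using sum_remove_clusters_le_exp[OF T \<open>Y \<in> S\<close> F] u_nonneg[OF \<open>Y \<in> S\<close>]
        by (rule mult_left_mono)
      finally show ?thesis .
    qed
    then show "(\<Sum>M\<in>F. t Y M) \<le> (if Y \<inter> Z \<noteq> {} then weight Y else 0)"
      by (simp add: t_def)
  qed
  also have "\<dots> \<le> c Z" using touching_sum_le[OF assms(3) T] .
  finally show ?thesis .
qed

lemma infsum_clusters_le:
  assumes "Z \<in> S"
  shows "(\<Sum>\<^sub>\<infinity>k\<in>{1..}. \<Sum>\<^sub>\<infinity>M\<in>msets_of S k. ennreal (cluster_weight u Z M))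
    \<le> ennreal (exp (c Z) - 1)"
proof (rule infsum_infsum_ennreal_le[OF msets_of_disjoint])
  show "0 \<le> cluster_weight u Z M" if "M \<in> (\<Union>k\<in>{1..}. msets_of S k)" for M
    using that u_nonneg by (intro cluster_weight_nonneg) (auto simp: msets_of_def)
  fix F assume "finite F" "F \<subseteq> (\<Union>k\<in>{1..}. msets_of S k)"
  then show "(\<Sum>M\<in>F. cluster_weight u Z M) \<le> exp (c Z) - 1"
    using assms by (intro sum_clusters_le) (auto simp: msets_of_def)
qed

lemma infsum_connected_clusters_le:
  assumes "Z \<in> S"
  shows "(\<Sum>\<^sub>\<infinity>k\<in>{1..}. \<Sum>\<^sub>\<infinity>M\<in>conn_msets_of S k. ennreal (cluster_weight u Z M))
    \<le> ennreal (c Z)"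
proof (rule infsum_infsum_ennreal_le)
  show "conn_msets_of S k \<inter> conn_msets_of S l = {}" if "k \<noteq> l" for k l
    using msets_of_disjoint[OF that] by (auto simp: conn_msets_of_def)
  show "0 \<le> cluster_weight u Z M" if "M \<in> (\<Union>k\<in>{1..}. conn_msets_of S k)" for M
    using that u_nonneg by (intro cluster_weight_nonneg) (auto simp: conn_msets_of_def msets_of_def)
  fix F assume "finite F" "F \<subseteq> (\<Union>k\<in>{1..}. conn_msets_of S k)"
  then show "(\<Sum>M\<in>F. cluster_weight u Z M) \<le> c Z"
    using assms by (intro sum_connected_clusters_le) (auto simp: conn_msets_of_def msets_of_def)
qed

end

lemma kotecky_preiss_supp_int:
  fixes Phi :: "'v set \<Rightarrow> 'a::zero"
  assumes c_nonneg: "\<And>X. finite X \<Longrightarrow> c X \<ge> 0"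
    and u_nonneg: "\<And>X. finite X \<Longrightarrow> u X \<ge> 0"
    and hyp: "\<And>Z. Z \<in> supp_int Phi \<Longrightarrow>
      (\<Sum>\<^sub>\<infinity>X\<in>supp_int Phi. ennreal (chi {#Z, X#} * u X * exp (c X))) \<le> ennreal (c Z)"
  shows "kotecky_preiss (supp_int Phi) u c"
proof
  show u_nonneg_S: "0 \<le> u X" if "X \<in> supp_int Phi" for X
    using that u_nonneg by (simp add: supp_int_def)
  fix X T assume X: "X \<in> supp_int Phi" and T: "finite T" "T \<subseteq> supp_int Phi"
  let ?w = "\<lambda>Y. u Y * exp (c Y)"
  have "0 \<le> ?w Y" if "Y \<in> T" for Y using that T u_nonneg_S by auto
  then have "touching_sum ?w X T \<le> (\<Sum>Y\<in>T. chi {#X, Y#} * u Y * exp (c Y))"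
    unfolding mult.assoc by (rule touching_sum_le_sum_chi)
  also have "\<dots> \<le> c X"
    using T hyp[OF X] c_nonneg X u_nonneg_S
    by (intro sum_le_if_infsum_ennreal_le[where S = "supp_int Phi"]) (auto simp: supp_int_def chi_def)
  finally show "touching_sum ?w X T \<le> c X" .
qed

theorem lemma3p12:
  fixes Phi :: "'v set \<Rightarrow> 'a::zero"
    and c u :: "'v set \<Rightarrow> real"
  assumes c_nonneg: "\<And>X. finite X \<Longrightarrow> c X \<ge> 0"
    and u_nonneg: "\<And>X. finite X \<Longrightarrow> u X \<ge> 0"
    and hyp: "\<And>Z. Z \<in> supp_int Phi \<Longrightarrow>
      (\<Sum>\<^sub>\<infinity>X\<in>supp_int Phi. ennreal (chi {#Z, X#} * u X * exp (c X))) \<le> ennreal (c Z)"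
  shows "\<forall>Z\<in>supp_int Phi.
      (\<Sum>\<^sub>\<infinity>k\<in>{1..}. \<Sum>\<^sub>\<infinity>M\<in>msets_of (supp_int Phi) k.
          ennreal (chi (add_mset Z M) * prod_mset (image_mset u M)))
        \<le> ennreal (exp (c Z) - 1)
    \<and> (\<Sum>\<^sub>\<infinity>k\<in>{1..}. \<Sum>\<^sub>\<infinity>M\<in>conn_msets_of (supp_int Phi) k.
          ennreal (chi (add_mset Z M) * prod_mset (image_mset u M)))
        \<le> ennreal (c Z)"
proof
  fix Z assume "Z \<in> supp_int Phi"
  interpret kotecky_preiss "supp_int Phi" u c
    using c_nonneg u_nonneg hyp by (rule kotecky_preiss_supp_int)
  show "(\<Sum>\<^sub>\<infinity>k\<in>{1..}. \<Sum>\<^sub>\<infinity>M\<in>msets_of (supp_int Phi) k.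
          ennreal (chi (add_mset Z M) * prod_mset (image_mset u M)))
        \<le> ennreal (exp (c Z) - 1)
    \<and> (\<Sum>\<^sub>\<infinity>k\<in>{1..}. \<Sum>\<^sub>\<infinity>M\<in>conn_msets_of (supp_int Phi) k.
          ennreal (chi (add_mset Z M) * prod_mset (image_mset u M)))
        \<le> ennreal (c Z)"
    using infsum_clusters_le infsum_connected_clusters_le \<open>Z \<in> supp_int Phi\<close>
    unfolding cluster_weight_def by blast
qed

end
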